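(* Let $n$ be a positive integer and $\mu>2$. Then for every polynomial $p\in\mathbb{P}^2_n$, $$\|p\|_Q\le\frac{1}{\cos\frac{\pi}{\mu}}\min\{\|p\|_{\mathcal A_{\lceil\mu n\rceil}},\ \|p\|_{\mathcal B_{\lceil\mu n\rceil}},\ \|p\|_{MP_{\lceil 2\mu n\rceil}}\},$$ i.e. $\mathcal A_{\lceil\mu n\rceil}$, $\mathcal B_{\lceil\mu n\rceil}$, $MP_{\lceil 2\mu n\rceil}$ are optimal admissible meshes for $\mathbb{P}^2_n$ in $Q$. Moreover, for any set $S\subset Q$ of $\frac{(n+1)(n+2)}{2}$ points which is unisolvent for $\mathbb{P}^2_n$, $$\Lambda_n^S\le\frac{1}{\cos\frac{\pi}{\mu}}\min\{\|\lambda_n^S\|_{\mathcal A_{\lceil\mu n\rceil}},\ \|\lambda_n^S\|_{\mathcal B_{\lceil\mu n\rceil}},\ \|\lambda_n^S\|_{MP_{\lceil 2\mu n\rceil}}\}.$$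
   Context: $Q=[-1,1]^2$, $\mathbb{P}^2_n$ is the space of real bivariate polynomials of total degree at most $n$, and for a set $T\subset Q$ and a function $g$, $\|g\|_T=\sup_{T}|g|$. For a positive integer $\nu$, the Morrow-Patterson set is $MP_\nu=\{(\cos\frac{m\pi}{\nu+2},\cos\frac{j\pi}{\nu+3}) : 1\le m\le\nu+1,\ 1\le j\le\nu+2,\ m+j \text{ odd}\}$ (it has $\frac{(\nu+1)(\nu+2)}{2}$ points). Define $\mathcal A_\nu=MP_\nu\cup\{(1,1),(-1,1)\}$ if $\nu$ is even and $\mathcal A_\nu=MP_\nu\cup\{(1,1),(1,-1)\}$ if $\nu$ is odd; $\mathcal B_\nu=MP_\nu\cup\{(\cos\frac{\pi}{\nu+2},\cos\frac{\pi}{\nu+3}),(\cos\frac{(\nu+1)\pi}{\nu+2},\cos\frac{\pi}{\nu+3})\}$ if $\nu$ is even and $\mathcal B_\nu=MP_\nu\cup\{(\cos\frac{\pi}{\nu+2},\cos\frac{\pi}{\nu+3}),(\cos\frac{\pi}{\nu+2},\cos\frac{(\nu+2)\pi}{\nu+3})\}$ if $\nu$ is odd. For a unisolvent set $S$, $\lambda_n^S=\sum_{s\in S}|\ell_s|$ with $\ell_s\in\mathbb{P}^2_n$ the Lagrange basis polynomials ($\ell_s(t)=\delta_{st}$ for $s,t\in S$), and $\Lambda_n^S=\|\lambda_n^S\|_Q$ is the Lebesgue constant. $\lceil x\rceil$ denotes the ceiling. *)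

theory Defs
  imports Complex_Main
begin

definition Qsq :: "(real \<times> real) set" where
  "Qsq = {-1..1} \<times> {-1..1}"

definition bipoly :: "nat \<Rightarrow> (real \<times> real \<Rightarrow> real) \<Rightarrow> bool" where
  "bipoly n f \<longleftrightarrow> (\<exists>c :: nat \<Rightarrow> nat \<Rightarrow> real.
     \<forall>x y. f (x, y) = (\<Sum>i\<le>n. \<Sum>j\<le>n - i. c i j * x ^ i * y ^ j))"

definition supnorm :: "(real \<times> real) set \<Rightarrow> (real \<times> real \<Rightarrow> real) \<Rightarrow> real" where
  "supnorm T g = (SUP t\<in>T. \<bar>g t\<bar>)"

definition MP :: "nat \<Rightarrow> (real \<times> real) set" where
  "MP \<nu> = {(cos (real m * pi / real (\<nu> + 2)), cos (real j * pi / real (\<nu> + 3))) | m j.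
             1 \<le> m \<and> m \<le> \<nu> + 1 \<and> 1 \<le> j \<and> j \<le> \<nu> + 2 \<and> odd (m + j)}"

definition setA :: "nat \<Rightarrow> (real \<times> real) set" where
  "setA \<nu> = (if even \<nu> then MP \<nu> \<union> {(1, 1), (-1, 1)} else MP \<nu> \<union> {(1, 1), (1, -1)})"

definition setB :: "nat \<Rightarrow> (real \<times> real) set" where
  "setB \<nu> = (if even \<nu> then
      MP \<nu> \<union> {(cos (pi / real (\<nu> + 2)), cos (pi / real (\<nu> + 3))),
               (cos (real (\<nu> + 1) * pi / real (\<nu> + 2)), cos (pi / real (\<nu> + 3)))}
    else
      MP \<nu> \<union> {(cos (pi / real (\<nu> + 2)), cos (pi / real (\<nu> + 3))),
               (cos (pi / real (\<nu> + 2)), cos (real (\<nu> + 2) * pi / real (\<nu> + 3)))})"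

definition unisolvent :: "nat \<Rightarrow> (real \<times> real) set \<Rightarrow> bool" where
  "unisolvent n S \<longleftrightarrow> (\<forall>d :: real \<times> real \<Rightarrow> real.
      \<exists>!p. bipoly n p \<and> (\<forall>s\<in>S. p s = d s))"

definition lagrange :: "nat \<Rightarrow> (real \<times> real) set \<Rightarrow> real \<times> real \<Rightarrow> (real \<times> real \<Rightarrow> real)" where
  "lagrange n S s = (THE p. bipoly n p \<and> (\<forall>t\<in>S. p t = (if t = s then 1 else 0)))"

definition lebfun :: "nat \<Rightarrow> (real \<times> real) set \<Rightarrow> real \<times> real \<Rightarrow> real" where
  "lebfun n S x = (\<Sum>s\<in>S. \<bar>lagrange n S s x\<bar>)"

end

theory Submission
  imports Defs "HOL-Analysis.Analysis" "HOL-Computational_Algebra.Polynomial"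
begin

text \<open>Write \<open>x = cos \<theta>\<close>, \<open>y = cos \<phi>\<close>. A trigonometric polynomial \<open>f\<close> of degree \<open>N\<close> with
  \<open>\<bar>f\<bar> \<le> f 0 = M\<close> satisfies \<open>f t \<ge> M cos (N t)\<close> for \<open>0 \<le> N t \<le> \<pi>\<close>: interpolating
  \<open>M cos (N t) - f t\<close> at the nodes \<open>k\<pi>/N\<close>, with a double node at \<open>0\<close>, writes it as a sum of
  non-positive terms. Along the line \<open>u \<mapsto> (\<theta>\<^sub>0 + a u, \<phi>\<^sub>0 + b u)\<close> with integers \<open>a\<close>, \<open>b\<close>, a
  polynomial of degree \<open>n\<close> is a trigonometric polynomial of degree \<open>n max \<bar>a\<bar> \<bar>b\<bar>\<close>. Starting from
  a maximum point of \<open>\<bar>p\<bar>\<close> on the square and passing to the limit over rational directions,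
  \<open>\<bar>p\<bar>\<close> is at least \<open>cos \<delta>\<close> times its maximum at angular distance \<open>\<delta>/n\<close>. The sets \<open>\<A>\<^sub>\<nu>\<close>, \<open>\<B>\<^sub>\<nu>\<close>
  meet every cell of the angular grid \<open>(m\<pi>/(\<nu>+2), j\<pi>/(\<nu>+3))\<close> and \<open>MP\<^sub>\<nu>\<close> every \<open>3 \<times> 3\<close>
  block of cells, which gives the mesh inequalities with \<open>\<delta> = \<pi>/\<mu>\<close>. They transfer to the Lebesgue
  function through the polynomial \<open>\<Sum>\<^sub>s sgn (\<ell>\<^sub>s x) \<ell>\<^sub>s\<close>, which equals \<open>\<lambda>(x)\<close> at \<open>x\<close> and is
  dominated by \<open>\<lambda>\<close> everywhere.\<close>

section \<open>Trigonometric polynomials\<close>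

text \<open>A trigonometric polynomial \<open>\<Sum>\<^bsub>-N\<le>k\<le>N\<^esub> c\<^sub>k e\<^sup>i\<^sup>k\<^sup>t\<close> is \<open>e\<^sup>-\<^sup>i\<^sup>N\<^sup>t P (e\<^sup>i\<^sup>t)\<close> for a polynomial \<open>P\<close> of
  degree at most \<open>2N\<close>.\<close>
definition trig_poly :: "nat \<Rightarrow> (real \<Rightarrow> real) \<Rightarrow> bool" where
  "trig_poly N f \<longleftrightarrow> (\<exists>P :: complex poly. degree P \<le> 2 * N \<and>
     (\<forall>t. complex_of_real (f t) = cis (- (real N * t)) * poly P (cis t)))"

lemma trig_poly_add: "trig_poly N f \<Longrightarrow> trig_poly N g \<Longrightarrow> trig_poly N (\<lambda>t. f t + g t)"
  unfolding trig_poly_def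
  by (elim exE conjE, rule_tac x = "P + Pa" in exI) (auto simp: degree_add_le distrib_left)

lemma trig_poly_cmult: "trig_poly N f \<Longrightarrow> trig_poly N (\<lambda>t. c * f t)"
  unfolding trig_poly_def
  by (elim exE conjE, rule_tac x = "smult (complex_of_real c) P" in exI) auto

lemma trig_poly_diff: "trig_poly N f \<Longrightarrow> trig_poly N g \<Longrightarrow> trig_poly N (\<lambda>t. f t - g t)"
  using trig_poly_add[of N f "\<lambda>t. (-1) * g t"] trig_poly_cmult[of N g "-1"] by simp

lemma trig_poly_const: "trig_poly N (\<lambda>t. c)"
  unfolding trig_poly_def
proof (intro exI conjI allI)
  show "degree (monom (complex_of_real c) N) \<le> 2 * N"
    by (rule order.trans[OF degree_monom_le]) simp
  fix t
  have "cis (- (real N * t)) * cis t ^ N = 1"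
    by (simp add: Complex.DeMoivre cis_mult)
  then show "complex_of_real c = cis (- (real N * t)) * poly (monom (complex_of_real c) N) (cis t)"
    by (simp add: poly_monom mult.left_commute)
qed

lemma trig_poly_sum:
  "finite A \<Longrightarrow> (\<And>i. i \<in> A \<Longrightarrow> trig_poly N (f i)) \<Longrightarrow> trig_poly N (\<lambda>t. \<Sum>i\<in>A. f i t)"
  by (induction A rule: finite_induct) (auto intro: trig_poly_add trig_poly_const[of N 0, simplified])

lemma trig_poly_mono:
  assumes "trig_poly N f" "N \<le> N'"
  shows "trig_poly N' f"
proof -
  obtain P where deg: "degree P \<le> 2 * N"
    and P: "\<And>t. complex_of_real (f t) = cis (- (real N * t)) * poly P (cis t)"
    using assms(1) unfolding trig_poly_def by blast
  show ?thesis unfolding trig_poly_def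
  proof (intro exI conjI allI)
    show "degree (monom 1 (N' - N) * P) \<le> 2 * N'"
      using deg assms(2) degree_mult_le[of "monom (1::complex) (N' - N)" P]
      by (simp add: degree_monom_eq)
    fix t
    have "cis (- (real N' * t)) * cis t ^ (N' - N) = cis (- (real N * t))"
      using assms(2) by (simp add: Complex.DeMoivre cis_mult of_nat_diff algebra_simps)
    then show "complex_of_real (f t) = cis (- (real N' * t)) * poly (monom 1 (N' - N) * P) (cis t)"
      by (simp add: P poly_monom mult.assoc[symmetric])
  qed
qed

lemma trig_poly_mult:
  assumes "trig_poly N f" "trig_poly M g"
  shows "trig_poly (N + M) (\<lambda>t. f t * g t)"
proof -
  obtain P Q where "degree P \<le> 2 * N" "\<And>t. complex_of_real (f t) = cis (- (real N * t)) * poly P (cis t)"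
    and "degree Q \<le> 2 * M" "\<And>t. complex_of_real (g t) = cis (- (real M * t)) * poly Q (cis t)"
    using assms unfolding trig_poly_def by blast
  then show ?thesis unfolding trig_poly_def
    by (intro exI[of _ "P * Q"] conjI allI order.trans[OF degree_mult_le])
       (simp_all add: cis_mult algebra_simps)
qed

lemma trig_poly_power: "trig_poly N f \<Longrightarrow> trig_poly (k * N) (\<lambda>t. f t ^ k)"
proof (induction k)
  case 0
  then show ?case using trig_poly_const[of 0 1] by simp
next
  case (Suc k)
  then show ?case using trig_poly_mult[of N f "k * N"] by (simp add: add.commute)
qed

lemma trig_poly_cos: "trig_poly k (\<lambda>t. cos (real k * t + c))"
  unfolding trig_poly_def
proof (intro exI conjI allI)
  let ?P = "monom (cis c / 2) (2 * k) + [:cis (- c) / 2:]"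
  show "degree ?P \<le> 2 * k"
    by (metis degree_add_le degree_monom_le degree_pCons_0 le0)
  fix t
  have "cis (- (real k * t)) * poly ?P (cis t) = (cis (real k * t + c) + cis (- (real k * t + c))) / 2"
    by (simp add: poly_monom Complex.DeMoivre cis_mult field_simps)
  also have "\<dots> = complex_of_real (cos (real k * t + c))"
    using cos_minus[of "real k * t + c"] sin_minus[of "real k * t + c"] by (simp add: complex_eq_iff)
  finally show "complex_of_real (cos (real k * t + c)) = cis (- (real k * t)) * poly ?P (cis t)" ..
qed

lemma trig_poly_sin: "trig_poly k (\<lambda>t. sin (real k * t + c))"
proof -
  have "sin (real k * t + c) = cos (real k * t + (c - pi / 2))" for t
    by (simp add: cos_add sin_add cos_diff sin_diff)
  then show ?thesis using trig_poly_cos[of k "c - pi / 2"] by simp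
qed

lemma trig_poly_cos_int: "trig_poly (nat \<bar>a\<bar>) (\<lambda>u. cos (\<theta> + of_int a * u))"
proof (cases "a \<ge> 0")
  case True
  then show ?thesis using trig_poly_cos[of "nat \<bar>a\<bar>" \<theta>] by (simp add: add.commute)
next
  case False
  have "cos (\<theta> + of_int a * u) = cos (real (nat \<bar>a\<bar>) * u + - \<theta>)" for u
  proof -
    have "cos (\<theta> + of_int a * u) = cos (- (\<theta> + of_int a * u))"
      by (rule cos_minus[symmetric])
    also have "- (\<theta> + of_int a * u) = real (nat \<bar>a\<bar>) * u + - \<theta>"
      using False by simp
    finally show ?thesis .
  qed
  then show ?thesis using trig_poly_cos[of "nat \<bar>a\<bar>" "- \<theta>"] by simp
qed

lemma trig_poly_degree_0:
  assumes "trig_poly 0 f"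
  shows "f t = f 0"
proof -
  obtain P where deg: "degree P = 0" and P: "\<And>t. complex_of_real (f t) = poly P (cis t)"
    using assms unfolding trig_poly_def by auto
  have "poly P z = coeff P 0" for z
    by (subst degree_0_id[OF deg, symmetric]) simp
  then have "complex_of_real (f t) = complex_of_real (f 0)"
    by (simp only: P)
  then show ?thesis by simp
qed

lemma trig_poly_rep_has_vector_derivative:
  assumes "\<And>t. complex_of_real (f t) = cis (- (real N * t)) * poly P (cis t)"
  shows "((\<lambda>t. complex_of_real (f t)) has_vector_derivative
           \<i> * (poly (pderiv P) 1 - of_nat N * poly P 1)) (at 0)"
proof -
  have "((\<lambda>z. exp (- (\<i> * of_nat N * z)) * poly P (exp (\<i> * z))) has_field_derivative
        \<i> * (poly (pderiv P) 1 - of_nat N * poly P 1)) (at (of_real 0))"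
    by (auto intro!: derivative_eq_intros DERIV_chain2[OF poly_DERIV] simp: algebra_simps)
  moreover have "(\<lambda>t. complex_of_real (f t)) =
      (\<lambda>t. exp (- (\<i> * of_nat N * of_real t)) * poly P (exp (\<i> * of_real t)))"
    by (simp add: assms cis_conv_exp mult.assoc fun_eq_iff)
  ultimately show ?thesis
    using has_vector_derivative_real_field by fastforce
qed

lemma trig_poly_has_real_derivative_0:
  assumes "trig_poly N f"
  obtains D where "(f has_real_derivative D) (at 0)"
proof -
  obtain P where "\<And>t. complex_of_real (f t) = cis (- (real N * t)) * poly P (cis t)"
    using assms unfolding trig_poly_def by blast
  from bounded_linear.has_vector_derivative[OF bounded_linear_Re trig_poly_rep_has_vector_derivative[OF this]]
  show ?thesis
    using that by (auto simp: has_real_derivative_iff_has_vector_derivative)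
qed

lemma poly_eq_0_if_double_root_and_roots:
  fixes P :: "'a::idom poly"
  assumes "finite R" "a \<notin> R" "\<forall>r\<in>R. poly P r = 0"
    and "poly P a = 0" "poly (pderiv P) a = 0" and "degree P < card R + 2"
  shows "P = 0"
proof (rule ccontr)
  assume "P \<noteq> 0"
  obtain Q where Q: "P = [:- a, 1:] * Q"
    using assms(4) by (auto simp: poly_eq_0_iff_dvd)
  have "poly Q a = 0"
    using assms(5) unfolding Q pderiv_mult by (simp add: pderiv_pCons)
  then obtain S where S: "Q = [:- a, 1:] * S"
    by (auto simp: poly_eq_0_iff_dvd)
  have "S \<noteq> 0" using \<open>P \<noteq> 0\<close> Q S by auto
  have "[:- a, 1:] * S \<noteq> 0"
    using \<open>S \<noteq> 0\<close> by (simp only: mult_eq_0_iff) simp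
  moreover have "degree ([:- a, 1:] * S) = degree S + 1"
    using \<open>S \<noteq> 0\<close> by (subst degree_mult_eq) auto
  ultimately have "degree P = degree S + 2"
    unfolding Q S by (subst degree_mult_eq) auto
  have "R \<subseteq> {x. poly S x = 0}"
  proof
    fix r assume "r \<in> R"
    then have "(r - a) ^ 2 * poly S r = 0" and "r \<noteq> a"
      using assms(2,3) unfolding Q S by (auto simp: power2_eq_square algebra_simps)
    then show "r \<in> {x. poly S x = 0}" by simp
  qed
  then have "card R \<le> card {x. poly S x = 0}"
    by (intro card_mono poly_roots_finite \<open>S \<noteq> 0\<close>)
  also have "\<dots> \<le> degree S"
    by (rule card_poly_roots_bound[OF \<open>S \<noteq> 0\<close>])
  finally show False using assms(6) \<open>degree P = degree S + 2\<close> by linarith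
qed

lemma trig_poly_eq_0_if_vanishes_at_nodes:
  assumes N: "N > 0" and "trig_poly N f"
    and nodes: "\<forall>m<2 * N. f (real m * pi / real N) = 0" and "(f has_real_derivative 0) (at 0)"
  shows "f t = 0"
proof -
  obtain P where deg: "degree P \<le> 2 * N"
    and P: "\<And>t. complex_of_real (f t) = cis (- (real N * t)) * poly P (cis t)"
    using assms(2) unfolding trig_poly_def by blast
  define z where "z m = cis (real m * pi / real N)" for m
  have roots: "poly P (z m) = 0" if "m < 2 * N" for m
    using nodes that P[of "real m * pi / real N"] by (simp add: z_def)
  have "\<i> * (poly (pderiv P) 1 - of_nat N * poly P 1) = of_real 0"
    using vector_derivative_unique_at[OF trig_poly_rep_has_vector_derivative[OF P]
        has_vector_derivative_of_real[OF assms(4)]] .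
  then have "poly (pderiv P) 1 = 0"
    using roots[of 0] N by (simp add: z_def)
  have "z = (\<lambda>k. cis (2 * pi * real k / real (2 * N)))"
    by (simp add: z_def fun_eq_iff mult_ac)
  then have inj: "inj_on z {..<2 * N}"
    using bij_betw_imp_inj_on[OF Complex.bij_betw_roots_unity[of "2 * N"]] N by simp
  have "P = 0"
  proof (rule poly_eq_0_if_double_root_and_roots)
    show "finite (z ` {1..<2 * N})" by simp
    show "1 \<notin> z ` {1..<2 * N}"
      using inj_on_contraD[OF inj, of 0] by (auto simp: z_def)
    show "\<forall>r\<in>z ` {1..<2 * N}. poly P r = 0" using roots by auto
    show "poly P 1 = 0" using roots[of 0] N by (simp add: z_def)
    show "poly (pderiv P) 1 = 0" by fact
    have "card (z ` {1..<2 * N}) = 2 * N - 1"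
      by (subst card_image) (auto intro: inj_on_subset[OF inj])
    then show "degree P < card (z ` {1..<2 * N}) + 2" using deg N by simp
  qed
  then show ?thesis using P[of t] by simp
qed


section \<open>The cosine lower bound for trigonometric polynomials\<close>

lemma sin_half_mult_sum_cos: "2 * sin (s / 2) * (\<Sum>j<N. cos ((real j + 1 / 2) * s)) = sin (real N * s)"
proof (induction N)
  case (Suc N)
  have "2 * sin (s / 2) * cos ((real N + 1 / 2) * s) = sin (real (Suc N) * s) - sin (real N * s)"
    using sin_times_cos[of "s / 2" "(real N + 1 / 2) * s"]
    by (simp add: algebra_simps)
  then show ?case using Suc by (simp add: algebra_simps)
qed simp

text \<open>By \<open>sin_half_mult_sum_cos\<close>,
  \<open>2 sin ((t - x\<^sub>k) / 2) \<cdot> trig_lagrange N k t = sin (t / 2) sin (N (t - x\<^sub>k))\<close> for the node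
  \<open>x\<^sub>k = k\<pi> / N\<close>: the function vanishes at the other nodes \<open>x\<^sub>m\<close> and to second order at \<open>x\<^sub>0 = 0\<close>.\<close>
definition trig_lagrange :: "nat \<Rightarrow> nat \<Rightarrow> real \<Rightarrow> real" where
  "trig_lagrange N k t = sin (t / 2) * (\<Sum>j<N. cos ((real j + 1 / 2) * (t - real k * pi / real N)))"

lemma trig_poly_trig_lagrange: "trig_poly N (trig_lagrange N k)"
proof -
  define c where "c j = - (real j + 1 / 2) * (real k * pi / real N)" for j
  have "sin (t / 2) * cos ((real j + 1 / 2) * (t - real k * pi / real N)) =
      sin (real (Suc j) * t + c j) / 2 - sin (real j * t + c j) / 2" for t j
  proof -
    have "t / 2 + (real j + 1 / 2) * (t - real k * pi / real N) = real (Suc j) * t + c j"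
      and "t / 2 - (real j + 1 / 2) * (t - real k * pi / real N) = - (real j * t + c j)"
      by (simp_all add: c_def algebra_simps)
    then show ?thesis by (simp only: sin_times_cos sin_minus) simp
  qed
  then have "trig_lagrange N k = (\<lambda>t. \<Sum>j<N. sin (real (Suc j) * t + c j) / 2 - sin (real j * t + c j) / 2)"
    by (simp add: trig_lagrange_def sum_distrib_left fun_eq_iff)
  moreover have "trig_poly N \<dots>"
    by (intro trig_poly_sum trig_poly_diff
        trig_poly_mono[OF trig_poly_cmult[OF trig_poly_sin], of _ _ "1 / 2", simplified]) auto
  ultimately show ?thesis by simp
qed

lemma trig_lagrange_mult_sin:
  assumes "N > 0"
  shows "sin ((t - real k * pi / real N) / 2) * trig_lagrange N k t = sin (t / 2) * (-1) ^ k * sin (real N * t) / 2"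
proof -
  have "real N * (t - real k * pi / real N) = real N * t - real k * pi"
    using assms by (simp add: field_simps)
  then show ?thesis
    using sin_half_mult_sum_cos[of "t - real k * pi / real N" N]
    by (simp add: trig_lagrange_def sin_diff algebra_simps)
qed

lemma trig_lagrange_node_pos:
  assumes "N > 0" "1 \<le> k" "k < 2 * N"
  shows "trig_lagrange N k (real k * pi / real N) > 0"
proof -
  have "0 < real k * pi / real N / 2" "real k * pi / real N / 2 < pi"
    using assms by (simp_all add: field_simps)
  then show ?thesis
    using assms(1) by (simp add: trig_lagrange_def sin_gt_zero)
qed

lemma trig_lagrange_other_node:
  assumes "N > 0" "k < 2 * N" "m < 2 * N" "m \<noteq> k"
  shows "trig_lagrange N k (real m * pi / real N) = 0"
proof -
  let ?y = "(real m * pi / real N - real k * pi / real N) / 2"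
  have y: "?y = (real m - real k) * pi / (2 * real N)"
    using assms(1) by (simp add: field_simps)
  have "- (2 * real N) * pi < (real m - real k) * pi" "(real m - real k) * pi < 2 * real N * pi"
    using assms by (intro mult_strict_right_mono, simp_all)+
  then have "- pi < ?y" "?y < pi" "?y \<noteq> 0"
    unfolding y using assms by (simp_all add: field_simps)
  then have "sin ?y \<noteq> 0"
    using sin_eq_0_pi by blast
  moreover have "sin (real N * (real m * pi / real N)) = 0"
    using assms(1) by simp
  ultimately show ?thesis
    using trig_lagrange_mult_sin[OF assms(1), of "real m * pi / real N" k] by simp
qed

lemma trig_lagrange_has_real_derivative_0:
  assumes "N > 0" "1 \<le> k" "k < 2 * N"
  shows "(trig_lagrange N k has_real_derivative 0) (at 0)"
proof -
  define S where "S t = (\<Sum>j<N. cos ((real j + 1 / 2) * (t - real k * pi / real N)))" for t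
  have "0 < real k * pi / real N / 2" "real k * pi / real N / 2 < pi"
    using assms by (simp_all add: field_simps)
  then have "sin (- (real k * pi / real N) / 2) \<noteq> 0"
    using sin_gt_zero by fastforce
  moreover have "2 * sin ((0 - real k * pi / real N) / 2) * S 0 = sin (real N * (0 - real k * pi / real N))"
    unfolding S_def by (rule sin_half_mult_sum_cos)
  ultimately have "S 0 = 0"
    using assms(1) by simp
  have "\<exists>S'. (S has_real_derivative S') (at 0)"
    unfolding S_def by (intro exI) (auto intro!: derivative_eq_intros)
  then obtain S' where "(S has_real_derivative S') (at 0)" ..
  then have "((\<lambda>t. sin (t / 2) * S t) has_real_derivative cos (0 / 2) * (1 / 2) * S 0 + sin (0 / 2) * S') (at 0)"
    by (auto intro!: derivative_eq_intros)
  then show ?thesis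
    using \<open>S 0 = 0\<close> by (simp add: trig_lagrange_def[abs_def] S_def)
qed

lemma trig_lagrange_sign:
  assumes "N > 0" "1 \<le> k" "k < 2 * N" "0 < t" "t < pi / real N"
  shows "(-1) ^ k * trig_lagrange N k t < 0"
proof -
  have "real k * pi / real N < 2 * pi" and "pi / real N \<le> real k * pi / real N"
    using assms by (simp_all add: field_simps)
  then have "0 < (real k * pi / real N - t) / 2" "(real k * pi / real N - t) / 2 < pi"
    using assms(4,5) by simp_all
  then have neg: "sin ((t - real k * pi / real N) / 2) < 0"
    using sin_gt_zero[of "(real k * pi / real N - t) / 2"] sin_minus[of "(real k * pi / real N - t) / 2"]
    by (simp add: minus_divide_left)
  have "t \<le> real N * t" "real N * t < pi"
    using assms(1,4,5) by (simp_all add: field_simps)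
  then have "0 < sin (t / 2)" "0 < sin (real N * t)"
    using assms(4) by (intro sin_gt_zero; linarith)+
  have "0 < sin (t / 2) * sin (real N * t) / 2"
    using \<open>0 < sin (t / 2)\<close> \<open>0 < sin (real N * t)\<close> by simp
  also have "\<dots> = sin ((t - real k * pi / real N) / 2) * ((-1) ^ k * trig_lagrange N k t)"
    using trig_lagrange_mult_sin[OF assms(1), of t k] by (cases "even k") (auto simp: algebra_simps)
  finally show ?thesis
    using neg by (simp add: zero_less_mult_iff)
qed

lemma trig_poly_interpolation:
  assumes N: "N > 0" and "trig_poly N f" "f 0 = 0" "(f has_real_derivative 0) (at 0)"
  shows "f t = (\<Sum>k\<in>{1..<2 * N}. f (real k * pi / real N) * trig_lagrange N k t
                                    / trig_lagrange N k (real k * pi / real N))"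
proof -
  define x where "x k = real k * pi / real N" for k
  define E where "E s = f s - (\<Sum>k\<in>{1..<2 * N}. f (x k) / trig_lagrange N k (x k) * trig_lagrange N k s)" for s
  have "trig_poly N E"
    unfolding E_def by (intro trig_poly_diff trig_poly_sum trig_poly_cmult trig_poly_trig_lagrange assms(2)) auto
  moreover have "E (x m) = 0" if "m < 2 * N" for m
  proof -
    have "(\<Sum>k\<in>{1..<2 * N}. f (x k) / trig_lagrange N k (x k) * trig_lagrange N k (x m)) =
        (\<Sum>k\<in>{1..<2 * N}. if k = m then f (x m) else 0)"
      using trig_lagrange_node_pos[OF N] trig_lagrange_other_node[OF N _ that]
      by (intro sum.cong) (auto simp: x_def less_imp_neq[symmetric])
    then show ?thesis
      using that \<open>f 0 = 0\<close> by (cases "m = 0") (simp_all add: E_def x_def)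
  qed
  moreover have "(E has_real_derivative 0 - (\<Sum>k\<in>{1..<2 * N}. f (x k) / trig_lagrange N k (x k) * 0)) (at 0)"
    unfolding E_def[abs_def]
    by (intro DERIV_diff DERIV_sum DERIV_cmult assms(4) trig_lagrange_has_real_derivative_0[OF N]) auto
  ultimately have "E t = 0"
    using trig_poly_eq_0_if_vanishes_at_nodes[OF N, of E] by (simp add: x_def)
  then show ?thesis
    by (simp add: E_def x_def)
qed

lemma trig_poly_ge_cos_interior:
  assumes N: "N > 0" and f: "trig_poly N f" and bound: "\<And>s. \<bar>f s\<bar> \<le> M" and "f 0 = M"
    and t: "0 < t" "t < pi / real N"
  shows "M * cos (real N * t) \<le> f t"
proof -
  define x where "x k = real k * pi / real N" for k
  define D where "D s = M * cos (real N * s) - f s" for s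
  have "trig_poly N D"
    unfolding D_def using trig_poly_cos[of N 0] by (intro trig_poly_diff trig_poly_cmult f) simp
  obtain f' where f': "(f has_real_derivative f') (at 0)"
    using trig_poly_has_real_derivative_0[OF f] .
  have "f' = 0"
    using bound \<open>f 0 = M\<close> by (intro DERIV_local_max[OF f', of 1]) (auto simp: abs_le_iff)
  then have "(D has_real_derivative M * (- sin (real N * 0) * real N) - 0) (at 0)"
    unfolding D_def[abs_def] using f' by (auto intro!: derivative_eq_intros)
  then have "D t = (\<Sum>k\<in>{1..<2 * N}. D (x k) * trig_lagrange N k t / trig_lagrange N k (x k))"
    using trig_poly_interpolation[OF N \<open>trig_poly N D\<close>] \<open>f 0 = M\<close> by (simp add: D_def x_def)
  also have "\<dots> \<le> 0"
  proof (rule sum_nonpos)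
    fix k assume k: "k \<in> {1..<2 * N}"
    have "(-1) ^ k * f (x k) \<le> M"
      using bound[of "x k"] by (cases "even k") auto
    then have "0 \<le> (-1) ^ k * D (x k)"
      using N by (cases "even k") (auto simp: D_def x_def)
    moreover have "(-1) ^ k * trig_lagrange N k t < 0"
      using k N t by (intro trig_lagrange_sign) auto
    moreover have "0 < trig_lagrange N k (x k)"
      using k N by (simp add: x_def trig_lagrange_node_pos)
    ultimately have "((-1) ^ k * D (x k)) * ((-1) ^ k * trig_lagrange N k t) / trig_lagrange N k (x k) \<le> 0"
      by (simp add: divide_nonpos_pos mult_nonneg_nonpos)
    then show "D (x k) * trig_lagrange N k t / trig_lagrange N k (x k) \<le> 0"
      by (cases "even k") auto
  qed
  finally show ?thesis by (simp add: D_def)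
qed

theorem trig_poly_ge_cos:
  assumes f: "trig_poly N f" and bound: "\<And>s. \<bar>f s\<bar> \<le> M" and "f 0 = M"
    and t: "0 \<le> t" "real N * t \<le> pi"
  shows "M * cos (real N * t) \<le> f t"
proof -
  consider "N = 0" | "t = 0" | "real N * t = pi" | "N > 0" "0 < t" "t < pi / real N"
    using t by (fastforce simp: field_simps)
  then show ?thesis
  proof cases
    case 1
    then show ?thesis using trig_poly_degree_0[of f t] f \<open>f 0 = M\<close> by simp
  next
    case 2
    then show ?thesis using \<open>f 0 = M\<close> by simp
  next
    case 3
    then show ?thesis using bound[of t] by simp
  next
    case 4
    then show ?thesis using trig_poly_ge_cos_interior[OF _ f bound \<open>f 0 = M\<close>] by blast
  qed
qed


section \<open>Bivariate polynomials along lines in the angle coordinates\<close>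

lemma bipoly_isCont:
  assumes "bipoly n p"
  shows "isCont p z"
proof -
  obtain c where "\<And>x y. p (x, y) = (\<Sum>i\<le>n. \<Sum>j\<le>n - i. c i j * x ^ i * y ^ j)"
    using assms unfolding bipoly_def by blast
  then have "p = (\<lambda>z. \<Sum>i\<le>n. \<Sum>j\<le>n - i. c i j * fst z ^ i * snd z ^ j)"
    by (auto simp: fun_eq_iff)
  then show ?thesis
    by (simp add: continuous_intros)
qed

lemma bipoly_cmult: "bipoly n p \<Longrightarrow> bipoly n (\<lambda>z. c * p z)"
  unfolding bipoly_def
  by (elim exE, rule_tac x = "\<lambda>i j. c * ca i j" in exI) (simp add: sum_distrib_left mult.assoc)

lemma bipoly_add: "bipoly n p \<Longrightarrow> bipoly n q \<Longrightarrow> bipoly n (\<lambda>z. p z + q z)"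
  unfolding bipoly_def
  by (elim exE, rule_tac x = "\<lambda>i j. c i j + ca i j" in exI) (simp add: sum.distrib distrib_right)

lemma bipoly_sum: "finite A \<Longrightarrow> (\<And>s. s \<in> A \<Longrightarrow> bipoly n (f s)) \<Longrightarrow> bipoly n (\<lambda>z. \<Sum>s\<in>A. f s z)"
proof (induction A rule: finite_induct)
  case empty
  show ?case unfolding bipoly_def by (rule exI[of _ "\<lambda>i j. 0"]) simp
qed (simp add: bipoly_add)

lemma bipoly_trig_poly:
  assumes "bipoly n p"
  shows "trig_poly (n * max (nat \<bar>a\<bar>) (nat \<bar>b\<bar>)) (\<lambda>u. p (cos (\<theta> + of_int a * u), cos (\<phi> + of_int b * u)))"
proof -
  obtain c where c: "\<And>x y. p (x, y) = (\<Sum>i\<le>n. \<Sum>j\<le>n - i. c i j * x ^ i * y ^ j)"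
    using assms unfolding bipoly_def by blast
  let ?K = "max (nat \<bar>a\<bar>) (nat \<bar>b\<bar>)"
  have "trig_poly (n * ?K) (\<lambda>u. c i j * (cos (\<theta> + of_int a * u) ^ i * cos (\<phi> + of_int b * u) ^ j))"
    if "i \<le> n" "j \<le> n - i" for i j
  proof (intro trig_poly_cmult trig_poly_mono[OF trig_poly_mult[OF trig_poly_power trig_poly_power]])
    show "trig_poly (nat \<bar>a\<bar>) (\<lambda>u. cos (\<theta> + of_int a * u))" "trig_poly (nat \<bar>b\<bar>) (\<lambda>u. cos (\<phi> + of_int b * u))"
      by (rule trig_poly_cos_int)+
    have "i * nat \<bar>a\<bar> + j * nat \<bar>b\<bar> \<le> (i + j) * ?K"
      by (simp add: add_mult_distrib add_mono)
    also have "\<dots> \<le> n * ?K"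
      using that by (intro mult_le_mono1) auto
    finally show "i * nat \<bar>a\<bar> + j * nat \<bar>b\<bar> \<le> n * ?K" .
  qed
  then have "trig_poly (n * ?K) (\<lambda>u. \<Sum>i\<le>n. \<Sum>j\<le>n - i. c i j * (cos (\<theta> + of_int a * u) ^ i * cos (\<phi> + of_int b * u) ^ j))"
    by (intro trig_poly_sum) auto
  then show ?thesis
    by (simp add: c mult.assoc)
qed

lemma floor_mult_divide_tendsto: "(\<lambda>k. of_int \<lfloor>real k * r\<rfloor> / real k) \<longlonglongrightarrow> r"
proof (rule tendsto_sandwich[of "\<lambda>k. r - 1 / real k" _ sequentially "\<lambda>k. r"])
  have bounds: "r - 1 / real k \<le> of_int \<lfloor>real k * r\<rfloor> / real k \<and> of_int \<lfloor>real k * r\<rfloor> / real k \<le> r"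
    if "k \<ge> 1" for k :: nat
  proof -
    have "(real k * r - 1) / real k \<le> of_int \<lfloor>real k * r\<rfloor> / real k"
      "of_int \<lfloor>real k * r\<rfloor> / real k \<le> real k * r / real k"
      by (intro divide_right_mono, linarith, simp)+
    then show ?thesis
      using that by (simp add: diff_divide_distrib)
  qed
  then show "\<forall>\<^sub>F k in sequentially. r - 1 / real k \<le> of_int \<lfloor>real k * r\<rfloor> / real k"
    "\<forall>\<^sub>F k in sequentially. of_int \<lfloor>real k * r\<rfloor> / real k \<le> r"
    using bounds by (auto intro!: eventually_sequentiallyI[of 1])
  show "(\<lambda>k. r - 1 / real k) \<longlonglongrightarrow> r"
    using tendsto_diff[OF tendsto_const lim_1_over_n, of r] by simp
qed simp

lemma nat_abs_floor_mult_le: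
  assumes "\<bar>r\<bar> \<le> 1"
  shows "nat \<bar>\<lfloor>real k * r\<rfloor>\<bar> \<le> k"
proof -
  have "\<bar>real k * r\<bar> \<le> real k"
    using assms mult_left_mono[of "\<bar>r\<bar>" 1 "real k"] by (simp add: abs_mult)
  then show ?thesis by linarith
qed

lemma bipoly_ge_cos_int_line:
  assumes "bipoly n p" "\<And>\<theta> \<phi>. \<bar>p (cos \<theta>, cos \<phi>)\<bar> \<le> M" "p (cos \<theta>\<^sub>0, cos \<phi>\<^sub>0) = M"
    and "0 \<le> u" "real (n * max (nat \<bar>a\<bar>) (nat \<bar>b\<bar>)) * u \<le> pi"
  shows "M * cos (real (n * max (nat \<bar>a\<bar>) (nat \<bar>b\<bar>)) * u) \<le> p (cos (\<theta>\<^sub>0 + of_int a * u), cos (\<phi>\<^sub>0 + of_int b * u))"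
proof -
  have "M * cos (real (n * max (nat \<bar>a\<bar>) (nat \<bar>b\<bar>)) * u) \<le>
      (\<lambda>u. p (cos (\<theta>\<^sub>0 + of_int a * u), cos (\<phi>\<^sub>0 + of_int b * u))) u"
    by (rule trig_poly_ge_cos[OF bipoly_trig_poly[OF assms(1)]]) (use assms(2-5) in auto)
  then show ?thesis by simp
qed

text \<open>A general direction \<open>(\<alpha>, \<beta>)\<close> is the limit of the directions \<open>(\<lfloor>k\<alpha>/r\<rfloor>, \<lfloor>k\<beta>/r\<rfloor>) \<cdot> r/k\<close>
  with \<open>r = max \<bar>\<alpha>\<bar> \<bar>\<beta>\<bar>\<close>, along which the polynomial has degree at most \<open>n k\<close> in \<open>u\<close>.\<close>
lemma bipoly_ge_cos_shift:
  assumes p: "bipoly n p" and bound: "\<And>\<theta> \<phi>. \<bar>p (cos \<theta>, cos \<phi>)\<bar> \<le> M"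
    and max: "p (cos \<theta>\<^sub>0, cos \<phi>\<^sub>0) = M" and small: "real n * max \<bar>\<alpha>\<bar> \<bar>\<beta>\<bar> \<le> pi"
  shows "M * cos (real n * max \<bar>\<alpha>\<bar> \<bar>\<beta>\<bar>) \<le> p (cos (\<theta>\<^sub>0 + \<alpha>), cos (\<phi>\<^sub>0 + \<beta>))"
proof (cases "max \<bar>\<alpha>\<bar> \<bar>\<beta>\<bar> = 0")
  case True
  then have "\<alpha> = 0" "\<beta> = 0"
    by (simp_all add: max_def split: if_splits)
  then show ?thesis using max by simp
next
  case False
  define r where "r = max \<bar>\<alpha>\<bar> \<bar>\<beta>\<bar>"
  have r: "r > 0" "\<bar>\<alpha> / r\<bar> \<le> 1" "\<bar>\<beta> / r\<bar> \<le> 1"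
    using False by (auto simp: r_def abs_divide divide_le_eq_1)
  define a where "a k = \<lfloor>real k * (\<alpha> / r)\<rfloor>" for k :: nat
  define b where "b k = \<lfloor>real k * (\<beta> / r)\<rfloor>" for k :: nat
  have "M \<ge> 0"
    using bound[of \<theta>\<^sub>0 \<phi>\<^sub>0] max by simp
  have "M * cos (real n * r) \<le> p (cos (\<theta>\<^sub>0 + of_int (a k) * (r / real k)), cos (\<phi>\<^sub>0 + of_int (b k) * (r / real k)))"
    if "k \<ge> 1" for k
  proof -
    define N where "N = n * max (nat \<bar>a k\<bar>) (nat \<bar>b k\<bar>)"
    have "N \<le> n * k"
      using nat_abs_floor_mult_le[OF r(2), of k] nat_abs_floor_mult_le[OF r(3), of k]
      by (simp add: N_def a_def b_def)
    then have "real N \<le> real n * real k"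
      by (metis of_nat_le_iff of_nat_mult)
    then have "real N * (r / real k) \<le> real n * real k * (r / real k)"
      using r(1) by (intro mult_right_mono) auto
    also have "\<dots> = real n * r"
      using that by simp
    finally have Nr: "real N * (r / real k) \<le> real n * r" .
    then have "M * cos (real n * r) \<le> M * cos (real N * (r / real k))"
      using \<open>M \<ge> 0\<close> small r(1) by (intro mult_left_mono cos_monotone_0_pi_le) (simp_all add: r_def)
    also have "\<dots> \<le> p (cos (\<theta>\<^sub>0 + of_int (a k) * (r / real k)), cos (\<phi>\<^sub>0 + of_int (b k) * (r / real k)))"
    proof (unfold N_def, rule bipoly_ge_cos_int_line[OF p bound max])
      show "0 \<le> r / real k"
        using r(1) by simp
      show "real (n * max (nat \<bar>a k\<bar>) (nat \<bar>b k\<bar>)) * (r / real k) \<le> pi"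
        using Nr small unfolding N_def r_def by linarith
    qed
    finally show ?thesis .
  qed
  moreover have "(\<lambda>k. of_int \<lfloor>real k * (c / r)\<rfloor> * (r / real k)) \<longlonglongrightarrow> c" for c
  proof -
    have "(\<lambda>k. of_int \<lfloor>real k * (c / r)\<rfloor> / real k * r) \<longlonglongrightarrow> c / r * r"
      by (intro tendsto_mult floor_mult_divide_tendsto tendsto_const)
    then show ?thesis
      using r(1) by (simp add: mult.commute)
  qed
  then have "(\<lambda>k. of_int (a k) * (r / real k)) \<longlonglongrightarrow> \<alpha>" "(\<lambda>k. of_int (b k) * (r / real k)) \<longlonglongrightarrow> \<beta>"
    by (simp_all add: a_def b_def)
  then have "(\<lambda>k. p (cos (\<theta>\<^sub>0 + of_int (a k) * (r / real k)), cos (\<phi>\<^sub>0 + of_int (b k) * (r / real k))))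
      \<longlonglongrightarrow> p (cos (\<theta>\<^sub>0 + \<alpha>), cos (\<phi>\<^sub>0 + \<beta>))"
    by (intro isCont_tendsto_compose[OF bipoly_isCont[OF p]] tendsto_intros)
  ultimately show ?thesis
    unfolding r_def[symmetric] by (intro LIMSEQ_le_const) blast+
qed


section \<open>Norming meshes\<close>

lemma cos_cos_in_Qsq: "(cos \<theta>, cos \<phi>) \<in> Qsq"
  by (simp add: Qsq_def)

lemma Qsq_obtain_angles:
  assumes "z \<in> Qsq"
  obtains \<theta> \<phi> where "\<theta> \<in> {0..pi}" "\<phi> \<in> {0..pi}" "z = (cos \<theta>, cos \<phi>)"
proof -
  obtain x y where "z = (x, y)" "\<bar>x\<bar> \<le> 1" "\<bar>y\<bar> \<le> 1"
    using assms by (auto simp: Qsq_def)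
  then show ?thesis
    using that[of "arccos x" "arccos y"] arccos_lbound arccos_ubound by simp
qed

lemma bipoly_supnorm_attained:
  assumes "bipoly n p"
  obtains \<theta> \<phi> where "\<theta> \<in> {0..pi}" "\<phi> \<in> {0..pi}" "supnorm Qsq p = \<bar>p (cos \<theta>, cos \<phi>)\<bar>"
    "\<And>z. z \<in> Qsq \<Longrightarrow> \<bar>p z\<bar> \<le> \<bar>p (cos \<theta>, cos \<phi>)\<bar>"
proof -
  have "compact Qsq" "Qsq \<noteq> {}"
    by (auto simp: Qsq_def compact_Times)
  moreover have "continuous_on Qsq (\<lambda>z. \<bar>p z\<bar>)"
    using bipoly_isCont[OF assms] by (intro continuous_intros continuous_at_imp_continuous_on) auto
  ultimately obtain z where z: "z \<in> Qsq" "\<And>w. w \<in> Qsq \<Longrightarrow> \<bar>p w\<bar> \<le> \<bar>p z\<bar>"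
    using continuous_attains_sup by metis
  moreover obtain \<theta> \<phi> where "\<theta> \<in> {0..pi}" "\<phi> \<in> {0..pi}" "z = (cos \<theta>, cos \<phi>)"
    using Qsq_obtain_angles[OF z(1)] .
  moreover have "supnorm Qsq p = \<bar>p z\<bar>"
    unfolding supnorm_def using z by (intro cSup_eq_maximum) auto
  ultimately show ?thesis using that by auto
qed

lemma abs_le_supnorm: "finite X \<Longrightarrow> z \<in> X \<Longrightarrow> \<bar>g z\<bar> \<le> supnorm X g"
  unfolding supnorm_def by (intro cSUP_upper) auto

definition cos_net :: "real \<Rightarrow> (real \<times> real) set \<Rightarrow> bool" where
  "cos_net r X \<longleftrightarrow> (\<forall>\<theta>\<in>{0..pi}. \<forall>\<phi>\<in>{0..pi}. \<exists>\<theta>' \<phi>'.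
     (cos \<theta>', cos \<phi>') \<in> X \<and> \<bar>\<theta>' - \<theta>\<bar> \<le> r \<and> \<bar>\<phi>' - \<phi>\<bar> \<le> r)"

theorem cos_mult_supnorm_le_cos_net:
  assumes p: "bipoly n p" and "finite X" "cos_net r X" "real n * r \<le> \<delta>" "\<delta> \<le> pi"
  shows "cos \<delta> * supnorm Qsq p \<le> supnorm X p"
proof -
  obtain \<theta> \<phi> where "\<theta> \<in> {0..pi}" "\<phi> \<in> {0..pi}" and sup: "supnorm Qsq p = \<bar>p (cos \<theta>, cos \<phi>)\<bar>"
    and max: "\<And>z. z \<in> Qsq \<Longrightarrow> \<bar>p z\<bar> \<le> \<bar>p (cos \<theta>, cos \<phi>)\<bar>"
    using bipoly_supnorm_attained[OF p] by blast
  obtain \<theta>' \<phi>' where X: "(cos \<theta>', cos \<phi>') \<in> X" and close: "\<bar>\<theta>' - \<theta>\<bar> \<le> r" "\<bar>\<phi>' - \<phi>\<bar> \<le> r"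
    using assms(3) \<open>\<theta> \<in> {0..pi}\<close> \<open>\<phi> \<in> {0..pi}\<close> unfolding cos_net_def by blast
  define d where "d = real n * max \<bar>\<theta>' - \<theta>\<bar> \<bar>\<phi>' - \<phi>\<bar>"
  have "0 \<le> d" "d \<le> \<delta>"
    using close assms(4) mult_left_mono[of "max \<bar>\<theta>' - \<theta>\<bar> \<bar>\<phi>' - \<phi>\<bar>" r "real n"]
    by (simp_all add: d_def)
  \<comment> \<open>flip the sign of \<open>p\<close> so that the maximum of \<open>\<bar>p\<bar>\<close> becomes a maximum\<close>
  define q where "q z = sgn (p (cos \<theta>, cos \<phi>)) * p z" for z
  have q_le: "\<bar>q z\<bar> \<le> \<bar>p z\<bar>" for z
    by (simp add: q_def abs_mult abs_sgn_eq)
  have "\<bar>q (cos \<theta>'', cos \<phi>'')\<bar> \<le> supnorm Qsq p" for \<theta>'' \<phi>''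
    using q_le max[OF cos_cos_in_Qsq] sup order.trans by metis
  moreover have "q (cos \<theta>, cos \<phi>) = supnorm Qsq p"
    by (simp add: q_def sup sgn_if)
  ultimately have "supnorm Qsq p * cos d \<le> q (cos (\<theta> + (\<theta>' - \<theta>)), cos (\<phi> + (\<phi>' - \<phi>)))"
    unfolding d_def q_def[abs_def] using \<open>d \<le> \<delta>\<close> assms(5)
    by (intro bipoly_ge_cos_shift bipoly_cmult[OF p]) (auto simp: d_def)
  also have "\<dots> \<le> supnorm X p"
    using q_le[of "(cos \<theta>', cos \<phi>')"] abs_le_supnorm[OF assms(2) X, of p] by simp
  finally have "supnorm Qsq p * cos d \<le> supnorm X p" .
  moreover have "cos \<delta> \<le> cos d"
    using \<open>0 \<le> d\<close> \<open>d \<le> \<delta>\<close> assms(5) by (intro cos_monotone_0_pi_le) auto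
  then have "cos \<delta> * supnorm Qsq p \<le> supnorm Qsq p * cos d"
    unfolding sup mult.commute[of _ "cos d"] by (rule mult_right_mono) auto
  ultimately show ?thesis by linarith
qed

lemma cos_pi_divide_pos:
  assumes "\<mu> > 2"
  shows "0 < cos (pi / \<mu>)"
proof -
  have "0 < pi / \<mu>" "pi / \<mu> < pi / 2"
    using assms by (simp_all add: field_simps)
  then show ?thesis
    by (intro cos_gt_zero_pi) auto
qed

definition norming_mesh :: "nat \<Rightarrow> real \<Rightarrow> (real \<times> real) set \<Rightarrow> bool" where
  "norming_mesh n C X \<longleftrightarrow> finite X \<and> X \<noteq> {} \<and> (\<forall>p. bipoly n p \<longrightarrow> supnorm Qsq p \<le> C * supnorm X p)"

lemma norming_mesh_cos_net:
  assumes "finite X" "cos_net (real d * pi / real K) X" "real (n * d) * \<mu> \<le> real K" "\<mu> > 2"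
  shows "norming_mesh n (1 / cos (pi / \<mu>)) X"
proof -
  have "(0::real) \<in> {0..pi}"
    by simp
  then have "X \<noteq> {}"
    using assms(2) unfolding cos_net_def by blast
  have "0 < pi / \<mu>" "pi / \<mu> \<le> pi"
    using assms(4) by (simp_all add: field_simps)
  have "real n * (real d * pi / real K) \<le> pi / \<mu>"
  proof (cases "K = 0")
    case False
    have "real n * (real d * pi / real K) = real (n * d) * \<mu> * (pi / (\<mu> * real K))"
      using assms(4) by (simp add: field_simps)
    also have "\<dots> \<le> real K * (pi / (\<mu> * real K))"
      using assms(3,4) by (intro mult_right_mono) auto
    also have "\<dots> = pi / \<mu>"
      using False by simp
    finally show ?thesis .
  qed (use \<open>0 < pi / \<mu>\<close> in simp)
  then have "cos (pi / \<mu>) * supnorm Qsq p \<le> supnorm X p" if "bipoly n p" for p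
    using that assms(1,2) \<open>pi / \<mu> \<le> pi\<close> by (intro cos_mult_supnorm_le_cos_net)
  then show ?thesis
    using cos_pi_divide_pos[OF assms(4)] assms(1) \<open>X \<noteq> {}\<close>
    by (simp add: norming_mesh_def field_simps)
qed

section \<open>Grids of Chebyshev--Lobatto type\<close>

definition grid_point :: "nat \<Rightarrow> nat \<Rightarrow> nat \<Rightarrow> real \<times> real" where
  "grid_point \<nu> m j = (cos (real m * pi / real (\<nu> + 2)), cos (real j * pi / real (\<nu> + 3)))"

lemma obtain_grid_index:
  assumes "\<theta> \<in> {0..pi}" "K > 0"
  obtains m where "m < K" "real m \<le> \<theta> * real K / pi" "\<theta> * real K / pi \<le> real m + 1"
proof -
  define s where "s = \<theta> * real K / pi"
  have "0 \<le> s" "s \<le> real K"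
    using assms by (auto simp: s_def divide_le_eq mult_left_mono)
  then have "nat \<lfloor>s\<rfloor> < K \<and> real (nat \<lfloor>s\<rfloor>) \<le> s \<and> s \<le> real (nat \<lfloor>s\<rfloor>) + 1 \<or>
      K - 1 < K \<and> real (K - 1) \<le> s \<and> s \<le> real (K - 1) + 1"
    using assms(2) by (cases "s < real K") (auto simp: of_nat_diff, linarith+)
  then show ?thesis
    using that unfolding s_def by blast
qed

lemma cos_net_grid:
  assumes "\<And>m\<^sub>1 j\<^sub>1. m\<^sub>1 \<le> \<nu> + 1 \<Longrightarrow> j\<^sub>1 \<le> \<nu> + 2 \<Longrightarrow>
    \<exists>m j. m\<^sub>1 + 1 \<le> m + d \<and> m \<le> m\<^sub>1 + d \<and> j\<^sub>1 + 1 \<le> j + d \<and> j \<le> j\<^sub>1 + d \<and> grid_point \<nu> m j \<in> X"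
  shows "cos_net (real d * pi / real (\<nu> + 2)) X"
  unfolding cos_net_def
proof (intro ballI)
  have close: "\<bar>real m * pi / real K - \<theta>\<bar> \<le> real d * pi / real K"
    if "real m\<^sub>1 \<le> \<theta> * real K / pi" "\<theta> * real K / pi \<le> real m\<^sub>1 + 1" "m\<^sub>1 + 1 \<le> m + d" "m \<le> m\<^sub>1 + d" "K > 0"
    for m m\<^sub>1 K \<theta>
  proof -
    have "\<bar>real m - \<theta> * real K / pi\<bar> \<le> real d"
      using that(1-4) by linarith
    then have "\<bar>real m - \<theta> * real K / pi\<bar> * (pi / real K) \<le> real d * (pi / real K)"
      by (rule mult_right_mono) simp
    moreover have "real m * pi / real K - \<theta> = (real m - \<theta> * real K / pi) * (pi / real K)"
      using that(5) by (simp add: field_simps)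
    ultimately show ?thesis
      by (simp add: abs_mult)
  qed
  fix \<theta> \<phi> :: real assume "\<theta> \<in> {0..pi}" "\<phi> \<in> {0..pi}"
  obtain m\<^sub>1 where m\<^sub>1: "m\<^sub>1 < \<nu> + 2" "real m\<^sub>1 \<le> \<theta> * real (\<nu> + 2) / pi" "\<theta> * real (\<nu> + 2) / pi \<le> real m\<^sub>1 + 1"
    using obtain_grid_index[OF \<open>\<theta> \<in> {0..pi}\<close>, of "\<nu> + 2"] by auto
  obtain j\<^sub>1 where j\<^sub>1: "j\<^sub>1 < \<nu> + 3" "real j\<^sub>1 \<le> \<phi> * real (\<nu> + 3) / pi" "\<phi> * real (\<nu> + 3) / pi \<le> real j\<^sub>1 + 1"
    using obtain_grid_index[OF \<open>\<phi> \<in> {0..pi}\<close>, of "\<nu> + 3"] by auto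
  obtain m j where mj: "m\<^sub>1 + 1 \<le> m + d" "m \<le> m\<^sub>1 + d" "j\<^sub>1 + 1 \<le> j + d" "j \<le> j\<^sub>1 + d"
    and X: "grid_point \<nu> m j \<in> X"
    using assms[of m\<^sub>1 j\<^sub>1] m\<^sub>1(1) j\<^sub>1(1) by auto
  have "real d * pi / real (\<nu> + 3) \<le> real d * pi / real (\<nu> + 2)"
    by (intro divide_left_mono) auto
  then show "\<exists>\<theta>' \<phi>'. (cos \<theta>', cos \<phi>') \<in> X \<and> \<bar>\<theta>' - \<theta>\<bar> \<le> real d * pi / real (\<nu> + 2) \<and>
      \<bar>\<phi>' - \<phi>\<bar> \<le> real d * pi / real (\<nu> + 2)"
    using X close[OF m\<^sub>1(2,3) mj(1,2)] close[OF j\<^sub>1(2,3) mj(3,4)]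
    by (intro exI[of _ "real m * pi / real (\<nu> + 2)"] exI[of _ "real j * pi / real (\<nu> + 3)"])
      (auto simp: grid_point_def)
qed

lemma cell_contains_MP_index:
  fixes m\<^sub>1 j\<^sub>1 \<nu> :: nat
  assumes "m\<^sub>1 \<le> \<nu> + 1" "j\<^sub>1 \<le> \<nu> + 2"
  shows "(\<exists>m\<in>{m\<^sub>1, m\<^sub>1 + 1}. \<exists>j\<in>{j\<^sub>1, j\<^sub>1 + 1}.
            1 \<le> m \<and> m \<le> \<nu> + 1 \<and> 1 \<le> j \<and> j \<le> \<nu> + 2 \<and> odd (m + j))
    \<or> (m\<^sub>1, j\<^sub>1) = (0, 0) \<or> (even \<nu> \<and> (m\<^sub>1, j\<^sub>1) = (\<nu> + 1, 0)) \<or> (odd \<nu> \<and> (m\<^sub>1, j\<^sub>1) = (0, \<nu> + 2))"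
    (is "(\<exists>m\<in>_. \<exists>j\<in>_. ?I m j) \<or> _")
proof (cases "odd (m\<^sub>1 + j\<^sub>1)")
  case True
  consider "1 \<le> m\<^sub>1" "1 \<le> j\<^sub>1" | "m\<^sub>1 \<le> \<nu>" "j\<^sub>1 \<le> \<nu> + 1"
    | "m\<^sub>1 = 0" "j\<^sub>1 = \<nu> + 2" | "m\<^sub>1 = \<nu> + 1" "j\<^sub>1 = 0"
    using assms by atomize_elim arith
  then show ?thesis
  proof cases
    case 1
    then have "?I m\<^sub>1 j\<^sub>1" using True assms by simp
    then show ?thesis by blast
  next
    case 2
    then have "?I (m\<^sub>1 + 1) (j\<^sub>1 + 1)" using True by simp
    then show ?thesis by blast
  qed (use True in auto)
next
  case False
  consider "1 \<le> m\<^sub>1" "j\<^sub>1 \<le> \<nu> + 1" | "m\<^sub>1 \<le> \<nu>" "1 \<le> j\<^sub>1"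
    | "m\<^sub>1 = 0" "j\<^sub>1 = 0" | "m\<^sub>1 = \<nu> + 1" "j\<^sub>1 = \<nu> + 2"
    using assms by atomize_elim arith
  then show ?thesis
  proof cases
    case 1
    then have "?I m\<^sub>1 (j\<^sub>1 + 1)" using False assms by simp
    then show ?thesis by blast
  next
    case 2
    then have "?I (m\<^sub>1 + 1) j\<^sub>1" using False assms by simp
    then show ?thesis by blast
  qed (use False in auto)
qed

lemma grid_point_in_MP:
  "1 \<le> m \<Longrightarrow> m \<le> \<nu> + 1 \<Longrightarrow> 1 \<le> j \<Longrightarrow> j \<le> \<nu> + 2 \<Longrightarrow> odd (m + j) \<Longrightarrow>
    grid_point \<nu> m j \<in> MP \<nu>"
  unfolding MP_def grid_point_def by blast

lemma cos_net_MP_extension: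
  assumes "MP \<nu> \<subseteq> X"
    and "\<exists>m\<in>{0, 1}. \<exists>j\<in>{0, 1}. grid_point \<nu> m j \<in> X"
    and "even \<nu> \<Longrightarrow> \<exists>m\<in>{\<nu> + 1, \<nu> + 2}. \<exists>j\<in>{0, 1}. grid_point \<nu> m j \<in> X"
    and "odd \<nu> \<Longrightarrow> \<exists>m\<in>{0, 1}. \<exists>j\<in>{\<nu> + 2, \<nu> + 3}. grid_point \<nu> m j \<in> X"
  shows "cos_net (pi / real (\<nu> + 2)) X"
proof -
  have "\<exists>m\<in>{m\<^sub>1, m\<^sub>1 + 1}. \<exists>j\<in>{j\<^sub>1, j\<^sub>1 + 1}. grid_point \<nu> m j \<in> X"
    if "m\<^sub>1 \<le> \<nu> + 1" "j\<^sub>1 \<le> \<nu> + 2" for m\<^sub>1 j\<^sub>1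
    using cell_contains_MP_index[OF that]
  proof (elim disjE bexE)
    fix m j assume "m \<in> {m\<^sub>1, m\<^sub>1 + 1}" "j \<in> {j\<^sub>1, j\<^sub>1 + 1}"
      "1 \<le> m \<and> m \<le> \<nu> + 1 \<and> 1 \<le> j \<and> j \<le> \<nu> + 2 \<and> odd (m + j)"
    then show ?thesis using assms(1) grid_point_in_MP by blast
  next
    assume "(m\<^sub>1, j\<^sub>1) = (0, 0)"
    then show ?thesis using assms(2) by simp
  next
    assume "even \<nu> \<and> (m\<^sub>1, j\<^sub>1) = (\<nu> + 1, 0)"
    then show ?thesis using assms(3) by simp
  next
    assume "odd \<nu> \<and> (m\<^sub>1, j\<^sub>1) = (0, \<nu> + 2)"
    then show ?thesis using assms(4) by (simp add: eval_nat_numeral)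
  qed
  then have "\<exists>m j. m\<^sub>1 + 1 \<le> m + 1 \<and> m \<le> m\<^sub>1 + 1 \<and> j\<^sub>1 + 1 \<le> j + 1 \<and> j \<le> j\<^sub>1 + 1 \<and>
      grid_point \<nu> m j \<in> X"
    if "m\<^sub>1 \<le> \<nu> + 1" "j\<^sub>1 \<le> \<nu> + 2" for m\<^sub>1 j\<^sub>1
    using that by (metis insertE le_refl le_add1 singletonD)
  from cos_net_grid[of \<nu> 1 X, OF this] show ?thesis
    by simp
qed

lemma cos_net_setA: "cos_net (pi / real (\<nu> + 2)) (setA \<nu>)"
proof (rule cos_net_MP_extension)
  have "grid_point \<nu> 0 0 = (1, 1)" "grid_point \<nu> (\<nu> + 2) 0 = (-1, 1)" "grid_point \<nu> 0 (\<nu> + 3) = (1, -1)"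
    by (simp_all add: grid_point_def del: of_nat_add)
  then show "\<exists>m\<in>{0, 1}. \<exists>j\<in>{0, 1}. grid_point \<nu> m j \<in> setA \<nu>"
    "even \<nu> \<Longrightarrow> \<exists>m\<in>{\<nu> + 1, \<nu> + 2}. \<exists>j\<in>{0, 1}. grid_point \<nu> m j \<in> setA \<nu>"
    "odd \<nu> \<Longrightarrow> \<exists>m\<in>{0, 1}. \<exists>j\<in>{\<nu> + 2, \<nu> + 3}. grid_point \<nu> m j \<in> setA \<nu>"
    by (simp_all add: setA_def)
qed (auto simp: setA_def)

lemma cos_net_setB: "cos_net (pi / real (\<nu> + 2)) (setB \<nu>)"
proof (rule cos_net_MP_extension)
  show "\<exists>m\<in>{0, 1}. \<exists>j\<in>{0, 1}. grid_point \<nu> m j \<in> setB \<nu>"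
    "even \<nu> \<Longrightarrow> \<exists>m\<in>{\<nu> + 1, \<nu> + 2}. \<exists>j\<in>{0, 1}. grid_point \<nu> m j \<in> setB \<nu>"
    "odd \<nu> \<Longrightarrow> \<exists>m\<in>{0, 1}. \<exists>j\<in>{\<nu> + 2, \<nu> + 3}. grid_point \<nu> m j \<in> setB \<nu>"
    by (simp_all add: setB_def grid_point_def del: of_nat_add)
qed (auto simp: setB_def)

lemma cos_net_MP: "cos_net (2 * pi / real (\<nu> + 2)) (MP \<nu>)"
proof -
  have "\<exists>m j. m\<^sub>1 + 1 \<le> m + 2 \<and> m \<le> m\<^sub>1 + 2 \<and> j\<^sub>1 + 1 \<le> j + 2 \<and> j \<le> j\<^sub>1 + 2 \<and>
      grid_point \<nu> m j \<in> MP \<nu>"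
    if "m\<^sub>1 \<le> \<nu> + 1" "j\<^sub>1 \<le> \<nu> + 2" for m\<^sub>1 j\<^sub>1
    using cell_contains_MP_index[OF that]
  proof (elim disjE bexE)
    fix m j assume "m \<in> {m\<^sub>1, m\<^sub>1 + 1}" "j \<in> {j\<^sub>1, j\<^sub>1 + 1}"
      "1 \<le> m \<and> m \<le> \<nu> + 1 \<and> 1 \<le> j \<and> j \<le> \<nu> + 2 \<and> odd (m + j)"
    then show ?thesis by (intro exI[of _ m] exI[of _ j]) (auto intro: grid_point_in_MP)
  next
    assume "(m\<^sub>1, j\<^sub>1) = (0, 0)"
    then show ?thesis
      by - (rule exI[of _ 1], rule exI[of _ 2], auto intro: grid_point_in_MP)
  next
    assume "even \<nu> \<and> (m\<^sub>1, j\<^sub>1) = (\<nu> + 1, 0)"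
    then show ?thesis
      by - (rule exI[of _ "\<nu> + 1"], rule exI[of _ 2], auto intro: grid_point_in_MP)
  next
    assume "odd \<nu> \<and> (m\<^sub>1, j\<^sub>1) = (0, \<nu> + 2)"
    then show ?thesis
      by - (rule exI[of _ 2], rule exI[of _ "\<nu> + 2"], auto intro!: grid_point_in_MP dest: odd_pos)
  qed
  from cos_net_grid[of \<nu> 2 "MP \<nu>", OF this] show ?thesis
    by simp
qed

lemma MP_finite: "finite (MP \<nu>)"
proof -
  have "MP \<nu> \<subseteq> (\<lambda>(m, j). grid_point \<nu> m j) ` ({..\<nu> + 1} \<times> {..\<nu> + 2})"
    unfolding MP_def grid_point_def by auto
  then show ?thesis
    by (rule finite_subset) auto
qed

lemma norming_mesh_setA:
  assumes "\<mu> > 2"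
  shows "norming_mesh n (1 / cos (pi / \<mu>)) (setA (nat \<lceil>\<mu> * real n\<rceil>))"
proof (rule norming_mesh_cos_net[OF _ _ _ assms])
  show "finite (setA (nat \<lceil>\<mu> * real n\<rceil>))"
    using MP_finite by (simp add: setA_def)
  show "cos_net (real 1 * pi / real (nat \<lceil>\<mu> * real n\<rceil> + 2)) (setA (nat \<lceil>\<mu> * real n\<rceil>))"
    using cos_net_setA by simp
  show "real (n * 1) * \<mu> \<le> real (nat \<lceil>\<mu> * real n\<rceil> + 2)"
    using real_nat_ceiling_ge[of "\<mu> * real n"] by (simp add: mult.commute)
qed

lemma norming_mesh_setB:
  assumes "\<mu> > 2"
  shows "norming_mesh n (1 / cos (pi / \<mu>)) (setB (nat \<lceil>\<mu> * real n\<rceil>))"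
proof (rule norming_mesh_cos_net[OF _ _ _ assms])
  show "finite (setB (nat \<lceil>\<mu> * real n\<rceil>))"
    using MP_finite by (simp add: setB_def)
  show "cos_net (real 1 * pi / real (nat \<lceil>\<mu> * real n\<rceil> + 2)) (setB (nat \<lceil>\<mu> * real n\<rceil>))"
    using cos_net_setB by simp
  show "real (n * 1) * \<mu> \<le> real (nat \<lceil>\<mu> * real n\<rceil> + 2)"
    using real_nat_ceiling_ge[of "\<mu> * real n"] by (simp add: mult.commute)
qed

lemma norming_mesh_MP:
  assumes "\<mu> > 2"
  shows "norming_mesh n (1 / cos (pi / \<mu>)) (MP (nat \<lceil>2 * \<mu> * real n\<rceil>))"
proof (rule norming_mesh_cos_net[OF MP_finite _ _ assms])
  show "cos_net (real 2 * pi / real (nat \<lceil>2 * \<mu> * real n\<rceil> + 2)) (MP (nat \<lceil>2 * \<mu> * real n\<rceil>))"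
    using cos_net_MP by simp
  show "real (n * 2) * \<mu> \<le> real (nat \<lceil>2 * \<mu> * real n\<rceil> + 2)"
    using real_nat_ceiling_ge[of "2 * \<mu> * real n"] by (simp add: mult_ac)
qed

section \<open>Lebesgue functions\<close>

lemma bipoly_lagrange:
  assumes "unisolvent n S"
  shows "bipoly n (lagrange n S s)"
proof -
  have "\<exists>!p. bipoly n p \<and> (\<forall>t\<in>S. p t = (if t = s then 1 else 0))"
    using assms unfolding unisolvent_def by (rule allE[of _ "\<lambda>t. if t = s then 1 else 0"]) simp
  from theI'[OF this] show ?thesis
    unfolding lagrange_def by blast
qed

lemma supnorm_mono:
  assumes "finite X" "X \<noteq> {}" "\<And>z. z \<in> X \<Longrightarrow> \<bar>g z\<bar> \<le> \<bar>h z\<bar>"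
  shows "supnorm X g \<le> supnorm X h"
  unfolding supnorm_def using assms
  by (intro cSUP_mono) auto

lemma lebfun_supnorm_le:
  assumes "unisolvent n S" "finite S" "norming_mesh n C X" "0 \<le> C"
  shows "supnorm Qsq (lebfun n S) \<le> C * supnorm X (lebfun n S)"
  unfolding supnorm_def[of Qsq]
proof (rule cSUP_least)
  show "Qsq \<noteq> {}" by (auto simp: Qsq_def)
  fix x assume "x \<in> Qsq"
  have X: "finite X" "X \<noteq> {}" and mesh: "\<And>p. bipoly n p \<Longrightarrow> supnorm Qsq p \<le> C * supnorm X p"
    using assms(3) by (auto simp: norming_mesh_def)
  define p where "p z = (\<Sum>s\<in>S. sgn (lagrange n S s x) * lagrange n S s z)" for z
  have "bipoly n p"
    unfolding p_def[abs_def] using assms(1,2) by (intro bipoly_sum bipoly_cmult bipoly_lagrange)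
  have dominated: "\<bar>p z\<bar> \<le> \<bar>lebfun n S z\<bar>" for z
  proof -
    have "\<bar>p z\<bar> \<le> (\<Sum>s\<in>S. \<bar>sgn (lagrange n S s x) * lagrange n S s z\<bar>)"
      unfolding p_def by (rule sum_abs)
    also have "\<dots> \<le> lebfun n S z"
      unfolding lebfun_def by (intro sum_mono) (auto simp: abs_mult abs_sgn_eq)
    finally show ?thesis by simp
  qed
  have "\<bar>lebfun n S x\<bar> = \<bar>p x\<bar>"
    unfolding p_def lebfun_def by (simp add: abs_sgn mult.commute)
  also have "\<dots> \<le> supnorm Qsq p"
    using bipoly_supnorm_attained[OF \<open>bipoly n p\<close>] \<open>x \<in> Qsq\<close> by metis
  also have "\<dots> \<le> C * supnorm X p"
    by (rule mesh[OF \<open>bipoly n p\<close>])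
  also have "\<dots> \<le> C * supnorm X (lebfun n S)"
    using X dominated by (intro mult_left_mono supnorm_mono assms(4))
  finally show "\<bar>lebfun n S x\<bar> \<le> C * supnorm X (lebfun n S)" .
qed

theorem theorem6:
  fixes n :: nat and \<mu> :: real
  assumes "n > 0" and "\<mu> > 2"
  shows "(\<forall>p. bipoly n p \<longrightarrow>
           supnorm Qsq p \<le> (1 / cos (pi / \<mu>)) *
             min (min (supnorm (setA (nat \<lceil>\<mu> * real n\<rceil>)) p)
                      (supnorm (setB (nat \<lceil>\<mu> * real n\<rceil>)) p))
                 (supnorm (MP (nat \<lceil>2 * \<mu> * real n\<rceil>)) p))
       \<and> (\<forall>S. S \<subseteq> Qsq \<and> card S = (n + 1) * (n + 2) div 2 \<and> unisolvent n S \<longrightarrow>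
           supnorm Qsq (lebfun n S) \<le> (1 / cos (pi / \<mu>)) *
             min (min (supnorm (setA (nat \<lceil>\<mu> * real n\<rceil>)) (lebfun n S))
                      (supnorm (setB (nat \<lceil>\<mu> * real n\<rceil>)) (lebfun n S)))
                 (supnorm (MP (nat \<lceil>2 * \<mu> * real n\<rceil>)) (lebfun n S)))"
proof -
  let ?C = "1 / cos (pi / \<mu>)"
  have "0 \<le> ?C"
    using cos_pi_divide_pos[OF assms(2)] by simp
  have meshes: "norming_mesh n ?C (setA (nat \<lceil>\<mu> * real n\<rceil>))" "norming_mesh n ?C (setB (nat \<lceil>\<mu> * real n\<rceil>))"
    "norming_mesh n ?C (MP (nat \<lceil>2 * \<mu> * real n\<rceil>))"
    using norming_mesh_setA norming_mesh_setB norming_mesh_MP assms(2) by blast+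
  have "finite S" if "card S = (n + 1) * (n + 2) div 2" for S :: "(real \<times> real) set"
    using that by (intro card_ge_0_finite) simp
  then show ?thesis
    using meshes \<open>0 \<le> ?C\<close> lebfun_supnorm_le[OF _ _ meshes(1)] lebfun_supnorm_le[OF _ _ meshes(2)]
      lebfun_supnorm_le[OF _ _ meshes(3)]
    by (auto simp: norming_mesh_def min_mult_distrib_left)
qed

end
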